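(* For $r>0$ and $y\in[-\tfrac12,\tfrac12]$ let $\Sigma(r,y)=\sum_{h\in\mathcal S(r)}\|hy\|^2$. There exist positive constants $A_1,A_2$ and $r_*$, depending only on $m$ and $\{p_1,\dots,p_m\}$, such that for all $0<r<r_*$: (a) if $|y|\le r/2$ then $\Sigma(r,y)\ge A_1(y/r)^2(\log 1/r)^{m-1}$; (b) if $r/2\le |y|\le\tfrac12$ then $\Sigma(r,y)\ge A_2(\log 1/r)^{m-1}$. (c) Suppose $m=2$. For every $K>0$ and $\delta>0$ there exist $B>0$ and $r_{**}>0$ (depending on $p_1,p_2,K,\delta$) such that for every $0<r<r_{**}$ there is a set $E(K,r)\subseteq[-\tfrac12,\tfrac12]$ of Lebesgue measure at most $Br^{1-\delta}$ with $\Sigma(r,y)\ge K\log(1/r)$ for all $y\in[-\tfrac12,\tfrac12]\setminus E(K,r)$.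
   Context: Fix an integer $m\ge 2$ and integers $1<p_1<\dots<p_m$ with $\gcd(p_i,p_j)=1$ for $i\neq j$; let $\mathcal S=\{p_1^{\alpha_1}\cdots p_m^{\alpha_m}:\alpha_i\in\mathbb Z_{\ge0}\}$ and $\mathcal S(r)=\{h\in\mathcal S: hr\le1\}$ for $r>0$. $\|x\|$ denotes the distance from the real number $x$ to the nearest integer. *)

theory Defs
  imports "HOL-Analysis.Analysis"
begin

definition smooth_set :: "nat \<Rightarrow> (nat \<Rightarrow> nat) \<Rightarrow> nat set" where
  "smooth_set m p = {\<Prod>i\<in>{1..m}. p i ^ \<alpha> i | \<alpha>. True}"

definition smooth_set_le :: "nat \<Rightarrow> (nat \<Rightarrow> nat) \<Rightarrow> real \<Rightarrow> nat set" where
  "smooth_set_le m p r = {h \<in> smooth_set m p. real h * r \<le> 1}"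

definition dist_nint :: "real \<Rightarrow> real" where
  "dist_nint x = (INF k::int. \<bar>x - real_of_int k\<bar>)"

definition Sigma_sum :: "nat \<Rightarrow> (nat \<Rightarrow> nat) \<Rightarrow> real \<Rightarrow> real \<Rightarrow> real" where
  "Sigma_sum m p r y = (\<Sum>h\<in>smooth_set_le m p r. (dist_nint (real h * y))^2)"

end

theory Submission
  imports Defs
begin

text \<open>
  Let \<open>q = p\<^sub>n\<^sub>+\<^sub>1\<close>. The set \<open>S\<^sub>n\<^sub>+\<^sub>1(\<sigma>)\<close> contains the disjoint slices \<open>q\<^sup>c S\<^sub>n(\<sigma> q\<^sup>c)\<close> for
  \<open>q\<^sup>2\<^sup>c \<le> 1/\<sigma>\<close>, about \<open>log(1/\<sigma>) / (2 log q)\<close> of them, each of size \<open>\<ge> C log(1/\<sigma>)\<^sup>n\<close> by induction.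
  The same slicing gives \<open>\<Sigma>\<^sub>n(\<sigma>, x) \<ge> A log(1/\<sigma>)\<^sup>n\<^sup>-\<^sup>1\<close> whenever \<open>\<parallel>x\<parallel> \<ge> \<sigma>/2\<close>: either every slice
  inherits the bound with \<open>x\<close> replaced by \<open>q\<^sup>c x\<close>, or \<open>\<parallel>q\<^sup>c x\<parallel>\<close> stops growing like \<open>\<sigma> q\<^sup>c / 2\<close> at
  some \<open>c\<close>, and then coprimality to \<open>q\<close> forces \<open>\<parallel>k q\<^sup>c\<^sup>-\<^sup>1 x\<parallel> \<ge> 1/(2q)\<close> for every \<open>k\<close> in a whole
  slice. Parts (a) and (b) follow because \<open>\<parallel>h y\<parallel> = h \<bar>y\<bar>\<close> for \<open>h \<in> S(r)\<close> and \<open>\<bar>y\<bar> \<le> r/2\<close>.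

  For (c) put \<open>q = p\<^sub>1\<close>, \<open>Q = p\<^sub>2\<close>. If for some \<open>c\<close> with \<open>Q\<^sup>c \<le> r\<^sup>-\<^sup>\<delta>\<^sup>'\<close> fewer than \<open>J\<close> of the
  powers \<open>q\<^sup>a Q\<^sup>c \<in> S(r)\<close> have \<open>\<parallel>q\<^sup>a Q\<^sup>c y\<parallel> \<ge> 1/(2q)\<close>, then the base-\<open>q\<close> carries of \<open>Q\<^sup>c y\<close> are
  sparse and \<open>y\<close> lies close to one of few rationals with denominator \<open>q\<^sup>N Q\<^sup>c\<close>; such \<open>y\<close> form a set
  of measure \<open>O(r\<^sup>1\<^sup>-\<^sup>\<delta>\<^sup>' log(1/r)\<^sup>2\<^sup>J\<^sup>+\<^sup>1)\<close>. Every other \<open>y\<close> collects \<open>J/(4q\<^sup>2)\<close> from each of the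
  \<open>\<approx> \<delta>' log(1/r) / log Q\<close> slices \<open>q\<^sup>a Q\<^sup>c\<close>, \<open>a \<ge> 0\<close>.
\<close>

section \<open>Distance to the nearest integer\<close>

lemma dist_nint_eq_abs_round: "dist_nint x = \<bar>x - of_int (round x)\<bar>"
  unfolding dist_nint_def
proof (rule antisym)
  show "(INF k::int. \<bar>x - real_of_int k\<bar>) \<le> \<bar>x - of_int (round x)\<bar>"
    by (rule cINF_lower) (auto intro: bdd_belowI[of _ 0])
  show "\<bar>x - of_int (round x)\<bar> \<le> (INF k::int. \<bar>x - real_of_int k\<bar>)"
    by (rule cINF_greatest) (auto simp: round_diff_minimal)
qed

lemma dist_nint_le: "dist_nint x \<le> \<bar>x - of_int k\<bar>"
  unfolding dist_nint_eq_abs_round by (rule round_diff_minimal)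

lemma dist_nint_le_half: "dist_nint x \<le> 1/2"
  unfolding dist_nint_eq_abs_round using of_int_round_abs_le[of x] by linarith

lemma dist_nint_eq_abs:
  assumes "\<bar>x\<bar> \<le> 1/2"
  shows "dist_nint x = \<bar>x\<bar>"
proof (cases "round x = 0")
  case False
  then have "\<bar>x\<bar> \<le> \<bar>x - of_int (round x)\<bar>"
    using assms by linarith
  with dist_nint_le[of x 0] show ?thesis
    unfolding dist_nint_eq_abs_round by simp
qed (simp add: dist_nint_eq_abs_round)

lemma dist_nint_add_of_int: "dist_nint (x + of_int k) = dist_nint x"
  using dist_nint_le[of "x + of_int k" "round x + k"] dist_nint_le[of x "round (x + of_int k) - k"]
  unfolding dist_nint_eq_abs_round by (simp add: algebra_simps)

lemma dist_nint_le_add: "dist_nint z \<le> dist_nint x + \<bar>x - z\<bar>"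
  using dist_nint_le[of z "round x"] unfolding dist_nint_eq_abs_round by linarith

lemma dist_nint_of_int_divide_ge:
  fixes q :: nat and z :: int
  assumes "q \<ge> 1" "\<not> int q dvd z"
  shows "1 / q \<le> dist_nint (of_int z / q)"
proof -
  define e where "e = z - q * round (of_int z / q)"
  have "e \<noteq> 0"
    using assms(2) by (metis dvd_triv_left e_def eq_iff_diff_eq_0)
  then have "1 \<le> \<bar>real_of_int e\<bar>"
    by linarith
  moreover have "dist_nint (of_int z / q) = \<bar>real_of_int e\<bar> / q"
    using assms(1) by (simp add: dist_nint_eq_abs_round e_def field_simps)
  ultimately show ?thesis
    using assms(1) by (simp add: divide_right_mono)
qed

text \<open>With \<open>t = u - round u\<close> and \<open>s = q u - round (q u)\<close> the integer in question is
  \<open>q t - s\<close>; the hypotheses give \<open>\<bar>s\<bar> < q \<bar>t\<bar> \<le> q/2\<close>, so it lies strictly between \<open>0\<close>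
  and \<open>\<plusminus>q\<close>.\<close>
lemma not_dvd_round_mult_sub:
  fixes q :: nat and u \<theta> :: real
  assumes q2: "2 \<le> q" and far: "\<theta> \<le> dist_nint u" and near: "dist_nint (q * u) < q * \<theta>"
  shows "\<not> int q dvd round (q * u) - q * round u"
proof -
  define t where "t = u - of_int (round u)"
  define s where "s = q * u - of_int (round (q*u))"
  define j where "j = round (q*u) - q * round u"
  have qt: "q * t = s + of_int j"
    unfolding t_def s_def j_def by (simp add: algebra_simps)
  have t: "\<theta> \<le> \<bar>t\<bar>" "\<bar>t\<bar> \<le> 1/2" and s: "\<bar>s\<bar> < q * \<theta>" "\<bar>s\<bar> \<le> 1/2"
    using far near dist_nint_le_half[of u] dist_nint_le_half[of "q*u"]
    unfolding t_def s_def dist_nint_eq_abs_round by auto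
  have "j \<noteq> 0"
  proof
    assume "j = 0"
    then have "q * \<bar>t\<bar> = \<bar>s\<bar>"
      using qt by (metis abs_mult abs_of_nat add_0_right of_int_0)
    moreover have "q * \<theta> \<le> q * \<bar>t\<bar>"
      using t(1) by (simp add: mult_left_mono)
    ultimately show False
      using s(1) by simp
  qed
  moreover have "\<bar>j\<bar> < q"
  proof -
    have "\<bar>q * t\<bar> \<le> q * (1/2)"
      using mult_left_mono[OF t(2), of "real q"] by (simp add: abs_mult)
    then have "\<bar>real_of_int j\<bar> \<le> q/2 + 1/2"
      using qt s(2) by linarith
    then show ?thesis
      using q2 by linarith
  qed
  ultimately show ?thesis
    using dvd_imp_le_int[of j "int q"] by (force simp: j_def)
qed

text \<open>Modulo \<open>1\<close>, \<open>k u\<close> is \<open>k j / q + k s / q\<close> with \<open>j\<close> as above and \<open>s = q u - round (q u)\<close>;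
  the first term is at distance \<open>\<ge> 1/q\<close> from the integers, the second is at most \<open>1/(2q)\<close>.\<close>
lemma dist_nint_mult_ge:
  fixes q k :: nat and u \<theta> :: real
  assumes q2: "2 \<le> q" and far: "\<theta> \<le> dist_nint u" and near: "dist_nint (q * u) < q * \<theta>"
    and cop: "coprime k q" and small: "k * dist_nint (q * u) \<le> 1/2"
  shows "1 / (2 * real q) \<le> dist_nint (k * u)"
proof -
  define s where "s = q * u - of_int (round (q*u))"
  define j where "j = round (q*u) - q * round u"
  have "\<not> int q dvd int k * j"
    using not_dvd_round_mult_sub[OF q2 far near] cop
    by (simp add: j_def coprime_commute coprime_dvd_mult_right_iff)
  then have "1/q \<le> dist_nint (of_int (int k * j) / q)"
    using q2 by (intro dist_nint_of_int_divide_ge) auto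
  moreover have "k * u = of_int (int k * round u) + (of_int (int k * j) / q + k * s / q)"
    using q2 by (simp add: s_def j_def field_simps)
  then have "dist_nint (k * u) = dist_nint (of_int (int k * j) / q + k * s / q)"
    by (metis add.commute dist_nint_add_of_int)
  moreover have "k * \<bar>s\<bar> \<le> 1/2"
    using small by (simp add: s_def dist_nint_eq_abs_round)
  then have "\<bar>k * s / q\<bar> \<le> 1 / (2 * real q)"
    using q2 by (simp add: abs_mult field_simps)
  ultimately show ?thesis
    using dist_nint_le_add[of "of_int (int k * j) / q" "of_int (int k * j) / q + k * s / q"]
    by (simp add: field_simps)
qed

section \<open>Smooth numbers and their slices\<close>

lemma finite_smooth_set_le:
  assumes "0 < \<sigma>"
  shows "finite (smooth_set_le n p \<sigma>)"
proof (rule finite_subset)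
  show "smooth_set_le n p \<sigma> \<subseteq> {..nat \<lceil>1/\<sigma>\<rceil>}"
  proof
    fix h assume "h \<in> smooth_set_le n p \<sigma>"
    then have "real h \<le> 1/\<sigma>"
      using assms by (simp add: smooth_set_le_def field_simps)
    then show "h \<in> {..nat \<lceil>1/\<sigma>\<rceil>}"
      by (simp add: nat_le_iff) linarith
  qed
qed simp

lemma smooth_set_0: "smooth_set 0 p = {1}"
  by (simp add: smooth_set_def)

lemma one_mem_smooth_set: "1 \<in> smooth_set n p"
  unfolding smooth_set_def by (auto intro: exI[of _ "\<lambda>_. 0"])

lemma power_mult_mem_smooth_set:
  assumes "k \<in> smooth_set n p"
  shows "p (Suc n) ^ c * k \<in> smooth_set (Suc n) p"
proof -
  obtain \<alpha> where k: "k = (\<Prod>i\<in>{1..n}. p i ^ \<alpha> i)"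
    using assms by (auto simp: smooth_set_def)
  define \<beta> where "\<beta> = \<alpha>(Suc n := c)"
  have "(\<Prod>i\<in>{1..Suc n}. p i ^ \<beta> i) = p (Suc n) ^ c * (\<Prod>i\<in>{1..n}. p i ^ \<beta> i)"
    by (simp add: \<beta>_def atLeastAtMostSuc_conv mult.commute)
  also have "(\<Prod>i\<in>{1..n}. p i ^ \<beta> i) = k"
    unfolding k \<beta>_def by (rule prod.cong) auto
  finally show ?thesis
    unfolding smooth_set_def by (metis (mono_tags, lifting) mem_Collect_eq)
qed

lemma coprime_smooth_set:
  assumes "\<And>i. i \<in> {1..n} \<Longrightarrow> coprime (p i) q" and "k \<in> smooth_set n p"
  shows "coprime k q"
  using assms by (auto simp: smooth_set_def intro!: prod_coprime_left)

lemma smooth_set_le_antimono: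
  assumes "\<sigma> \<le> \<tau>"
  shows "smooth_set_le n p \<tau> \<subseteq> smooth_set_le n p \<sigma>"
proof
  fix h assume "h \<in> smooth_set_le n p \<tau>"
  moreover have "real h * \<sigma> \<le> real h * \<tau>"
    using assms by (simp add: mult_left_mono)
  ultimately show "h \<in> smooth_set_le n p \<sigma>"
    by (simp add: smooth_set_le_def)
qed

lemma power_mult_coprime_inject:
  fixes q k k' :: nat
  assumes "q > 1" "coprime k q" "coprime k' q" "q ^ c * k = q ^ c' * k'"
  shows "c = c'"
proof -
  have "q ^ c dvd q ^ c'" "q ^ c' dvd q ^ c"
    using assms by (metis coprime_commute coprime_dvd_mult_left_iff coprime_power_left_iff dvd_triv_left)+
  then show ?thesis
    using assms(1) by (simp add: power_dvd_imp_le antisym)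
qed

text \<open>The slices \<open>q\<^sup>c \<cdot> S\<^sub>n(\<sigma> q\<^sup>c)\<close>, \<open>q = p (n+1)\<close>, are disjoint parts of \<open>S\<^sub>n\<^sub>+\<^sub>1(\<sigma>)\<close>.\<close>
lemma sum_slices_le_sum_smooth_set_le:
  fixes f :: "nat \<Rightarrow> real" and \<sigma> :: real
  assumes q: "p (Suc n) > 1" and cop: "\<And>k. k \<in> smooth_set n p \<Longrightarrow> coprime k (p (Suc n))"
    and "0 < \<sigma>" and "finite Cs" and f: "\<And>h. 0 \<le> f h"
  shows "(\<Sum>c\<in>Cs. \<Sum>k\<in>smooth_set_le n p (\<sigma> * real (p (Suc n)) ^ c). f (p (Suc n) ^ c * k))
          \<le> (\<Sum>h\<in>smooth_set_le (Suc n) p \<sigma>. f h)"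
proof -
  define q where "q = p (Suc n)"
  let ?B = "\<lambda>c. smooth_set_le n p (\<sigma> * real q ^ c)"
  let ?g = "\<lambda>(c, k). q ^ c * k"
  have inj: "inj_on ?g (SIGMA c:Cs. ?B c)"
  proof (rule inj_onI)
    fix x y assume "x \<in> (SIGMA c:Cs. ?B c)" "y \<in> (SIGMA c:Cs. ?B c)" and e: "?g x = ?g y"
    then obtain c k c' k' where xy: "x = (c, k)" "y = (c', k')" and "k \<in> ?B c" "k' \<in> ?B c'"
      by auto
    then have "coprime k q" "coprime k' q"
      using cop by (auto simp: smooth_set_le_def q_def)
    moreover have "q ^ c * k = q ^ c' * k'"
      using e xy by simp
    ultimately have "c = c'"
      using power_mult_coprime_inject[OF q[folded q_def]] by blast
    then show "x = y"
      using e q xy by (simp add: q_def)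
  qed
  have sub: "?g ` (SIGMA c:Cs. ?B c) \<subseteq> smooth_set_le (Suc n) p \<sigma>"
  proof clarify
    fix c k assume "k \<in> ?B c"
    then have "k \<in> smooth_set n p" "real k * (\<sigma> * real q ^ c) \<le> 1"
      by (auto simp: smooth_set_le_def)
    then show "q ^ c * k \<in> smooth_set_le (Suc n) p \<sigma>"
      using power_mult_mem_smooth_set[of k n p c]
      by (simp add: smooth_set_le_def q_def algebra_simps)
  qed
  have "(\<Sum>c\<in>Cs. \<Sum>k\<in>?B c. f (q ^ c * k)) = (\<Sum>x\<in>(SIGMA c:Cs. ?B c). f (?g x))"
    using sum.Sigma[OF \<open>finite Cs\<close>, of ?B] assms q
    by (simp add: finite_smooth_set_le q_def case_prod_beta')
  also have "\<dots> = (\<Sum>h\<in>?g ` (SIGMA c:Cs. ?B c). f h)"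
    by (rule sum.reindex[OF inj, symmetric, unfolded comp_def])
  also have "\<dots> \<le> (\<Sum>h\<in>smooth_set_le (Suc n) p \<sigma>. f h)"
    by (rule sum_mono2[OF finite_smooth_set_le[OF \<open>0 < \<sigma>\<close>] sub]) (use f in auto)
  finally show ?thesis
    unfolding q_def .
qed

definition coprime_generators :: "nat \<Rightarrow> (nat \<Rightarrow> nat) \<Rightarrow> bool" where
  "coprime_generators n p \<longleftrightarrow>
     (\<forall>i\<in>{1..n}. 2 \<le> p i) \<and> (\<forall>i\<in>{1..n}. \<forall>j\<in>{1..n}. i \<noteq> j \<longrightarrow> coprime (p i) (p j))"

lemma coprime_generators_Suc_D:
  assumes "coprime_generators (Suc n) p"
  shows "coprime_generators n p" "2 \<le> p (Suc n)"
    and "\<And>k. k \<in> smooth_set n p \<Longrightarrow> coprime k (p (Suc n))"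
proof -
  show "coprime_generators n p" "2 \<le> p (Suc n)"
    using assms by (auto simp: coprime_generators_def)
  show "\<And>k. k \<in> smooth_set n p \<Longrightarrow> coprime k (p (Suc n))"
    by (rule coprime_smooth_set) (use assms in \<open>auto simp: coprime_generators_def\<close>)
qed

lemma nat_floor_bounds:
  fixes x :: real
  assumes "0 \<le> x"
  shows "real (nat \<lfloor>x\<rfloor>) \<le> x" "x \<le> real (nat \<lfloor>x\<rfloor>) + 1"
  using assms by linarith+

definition num_slices :: "nat \<Rightarrow> real \<Rightarrow> nat" where
  "num_slices q \<sigma> = nat \<lfloor>ln (1/\<sigma>) / (2 * ln q)\<rfloor>"

lemma slice_bounds:
  fixes q c :: nat and \<sigma> s :: real
  assumes q: "2 \<le> q" and "0 < \<sigma>" "\<sigma> \<le> 1" "0 < s" "\<sigma> \<le> s\<^sup>2" and c: "c \<le> num_slices q \<sigma>"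
  shows "\<sigma> * real q ^ c \<le> s" "ln (1/\<sigma>) / 2 \<le> ln (1 / (\<sigma> * real q ^ c))"
proof -
  have "0 \<le> ln (1/\<sigma>)" "0 < ln q"
    using assms by auto
  then have "real (num_slices q \<sigma>) \<le> ln (1/\<sigma>) / (2 * ln q)"
    unfolding num_slices_def by (intro nat_floor_bounds) simp
  moreover have "real c \<le> real (num_slices q \<sigma>)"
    using c by simp
  ultimately have "real c \<le> ln (1/\<sigma>) / (2 * ln q)"
    by linarith
  then have cl: "c * ln q \<le> - ln \<sigma> / 2"
    using \<open>0 < ln q\<close> \<open>0 < \<sigma>\<close> by (simp add: field_simps ln_div)
  have e: "ln (\<sigma> * real q ^ c) = ln \<sigma> + c * ln q"
    using assms by (simp add: ln_mult ln_realpow)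
  have "ln \<sigma> \<le> ln (s\<^sup>2)"
    using assms by simp
  then have "ln \<sigma> \<le> 2 * ln s"
    using assms by (simp add: ln_realpow)
  then have "ln (\<sigma> * real q ^ c) \<le> ln s"
    using e cl by linarith
  then show "\<sigma> * real q ^ c \<le> s"
    using assms by simp
  show "ln (1/\<sigma>) / 2 \<le> ln (1 / (\<sigma> * real q ^ c))"
    using e cl assms by (simp add: ln_div)
qed

lemma sum_slices_lower_bound:
  fixes q :: nat and \<sigma> A :: real and g :: "nat \<Rightarrow> real"
  assumes q: "2 \<le> q" and "0 < \<sigma>" "\<sigma> \<le> 1" "0 \<le> A"
    and g: "\<And>c. c \<le> num_slices q \<sigma> \<Longrightarrow> A * (ln (1/\<sigma>) / 2) ^ j \<le> g c"
  shows "A / (2 ^ Suc j * ln q) * ln (1/\<sigma>) ^ Suc j \<le> (\<Sum>c\<le>num_slices q \<sigma>. g c)"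
proof -
  define L where "L = ln (1/\<sigma>)"
  have "0 \<le> L" "0 < ln q"
    using assms by (auto simp: L_def)
  then have "L / (2 * ln q) \<le> real (num_slices q \<sigma>) + 1"
    unfolding num_slices_def L_def by (intro nat_floor_bounds) simp
  have "A / (2 ^ Suc j * ln q) * L ^ Suc j = (L / (2 * ln q)) * (A * (L/2) ^ j)"
    by (simp add: power_divide field_simps)
  also have "\<dots> \<le> (real (num_slices q \<sigma>) + 1) * (A * (L/2) ^ j)"
    by (rule mult_right_mono) (use \<open>L / (2 * ln q) \<le> _\<close> \<open>0 \<le> L\<close> \<open>0 \<le> A\<close> in auto)
  also have "\<dots> = (\<Sum>c\<le>num_slices q \<sigma>. A * (L/2) ^ j)"
    by simp
  also have "\<dots> \<le> (\<Sum>c\<le>num_slices q \<sigma>. g c)"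
    by (rule sum_mono) (use g in \<open>auto simp: L_def\<close>)
  finally show ?thesis
    unfolding L_def .
qed

lemma card_smooth_set_le_Suc_lower_bound:
  fixes n :: nat and p :: "nat \<Rightarrow> nat" and \<sigma> s C :: real
  defines "q \<equiv> p (Suc n)"
  assumes gen: "coprime_generators (Suc n) p"
    and \<sigma>: "0 < \<sigma>" "\<sigma> \<le> s\<^sup>2" and s: "0 < s" "s \<le> 1" and "0 \<le> C"
    and IH: "\<And>\<tau>. 0 < \<tau> \<Longrightarrow> \<tau> \<le> s \<Longrightarrow> C * ln (1/\<tau>) ^ n \<le> card (smooth_set_le n p \<tau>)"
  shows "C / (2 ^ Suc n * ln q) * ln (1/\<sigma>) ^ Suc n \<le> card (smooth_set_le (Suc n) p \<sigma>)"
proof -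
  have q: "2 \<le> q" and cop: "\<And>k. k \<in> smooth_set n p \<Longrightarrow> coprime k q"
    using coprime_generators_Suc_D[OF gen] by (auto simp: q_def)
  have "\<sigma> \<le> 1"
    using \<sigma> s power_le_one[of s 2] by linarith
  have "C * (ln (1/\<sigma>) / 2) ^ n \<le> card (smooth_set_le n p (\<sigma> * real q ^ c))"
    if "c \<le> num_slices q \<sigma>" for c
  proof -
    note slice = slice_bounds[OF q \<sigma>(1) \<open>\<sigma> \<le> 1\<close> s(1) \<sigma>(2) that]
    have "C * (ln (1/\<sigma>) / 2) ^ n \<le> C * ln (1 / (\<sigma> * real q ^ c)) ^ n"
      using slice(2) \<sigma> \<open>\<sigma> \<le> 1\<close> \<open>0 \<le> C\<close> by (intro mult_left_mono power_mono) auto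
    also have "\<dots> \<le> card (smooth_set_le n p (\<sigma> * real q ^ c))"
      using IH slice(1) \<sigma> q by simp
    finally show ?thesis .
  qed
  then have "C / (2 ^ Suc n * ln q) * ln (1/\<sigma>) ^ Suc n
               \<le> (\<Sum>c\<le>num_slices q \<sigma>. \<Sum>k\<in>smooth_set_le n p (\<sigma> * real q ^ c). (1::real))"
    using sum_slices_lower_bound[OF q \<sigma>(1) \<open>\<sigma> \<le> 1\<close> \<open>0 \<le> C\<close>] by simp
  also have "\<dots> \<le> (\<Sum>h\<in>smooth_set_le (Suc n) p \<sigma>. 1)"
    using sum_slices_le_sum_smooth_set_le[of p n \<sigma> "{..num_slices q \<sigma>}" "\<lambda>_. 1"] q cop \<sigma>
    unfolding q_def by simp
  finally show ?thesis
    by simp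
qed

lemma card_smooth_set_le_lower_bound:
  assumes "coprime_generators n p"
  shows "\<exists>C>0. \<forall>\<^sub>F \<sigma> in at_right 0. C * ln (1/\<sigma>) ^ n \<le> card (smooth_set_le n p \<sigma>)"
  using assms
proof (induction n)
  case 0
  have "smooth_set_le 0 p \<sigma> = {1}" if "\<sigma> \<in> {0<..<1}" for \<sigma>
    using that by (auto simp: smooth_set_le_def smooth_set_0)
  then show ?case
    by (intro exI[of _ 1] conjI eventually_at_rightI[of 0 1]) auto
next
  case (Suc n)
  define q where "q = p (Suc n)"
  obtain C b where "C > 0" "b > 0"
    and IH: "\<And>\<sigma>. 0 < \<sigma> \<Longrightarrow> \<sigma> < b \<Longrightarrow> C * ln (1/\<sigma>) ^ n \<le> card (smooth_set_le n p \<sigma>)"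
    using Suc.IH coprime_generators_Suc_D[OF Suc.prems] by (auto simp: eventually_at_right_field)
  define s where "s = min (b/2) 1"
  have s: "0 < s" "s < b" "s \<le> 1"
    using \<open>b > 0\<close> by (auto simp: s_def)
  have "C / (2 ^ Suc n * ln q) > 0"
    using \<open>C > 0\<close> coprime_generators_Suc_D(2)[OF Suc.prems] by (simp add: q_def)
  moreover have "C / (2 ^ Suc n * ln q) * ln (1/\<sigma>) ^ Suc n \<le> card (smooth_set_le (Suc n) p \<sigma>)"
    if "\<sigma> \<in> {0<..<s\<^sup>2}" for \<sigma>
    using card_smooth_set_le_Suc_lower_bound[OF Suc.prems _ _ s(1,3), of \<sigma> C] IH s that \<open>C > 0\<close>
    by (simp add: q_def)
  ultimately show ?case
    using s by (intro exI[of _ "C / (2 ^ Suc n * ln q)"] conjI eventually_at_rightI[of 0 "s\<^sup>2"]) auto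
qed

section \<open>Lower bounds for \<open>\<Sigma>\<close>: parts (a) and (b)\<close>

lemma exists_power_bracket:
  fixes q :: nat and \<sigma> :: real
  assumes "2 \<le> q" "0 < \<sigma>" "\<sigma> \<le> 1"
  shows "\<exists>N. real q ^ N * \<sigma> \<le> 1 \<and> 1 < real q ^ Suc N * \<sigma>"
proof -
  obtain n where "1/\<sigma> < real q ^ n"
    using real_arch_pow[of "real q" "1/\<sigma>"] assms by auto
  then have "1 < real q ^ n * \<sigma>"
    using assms by (simp add: field_simps)
  then obtain N where "\<forall>i\<le>N. \<not> 1 < real q ^ i * \<sigma>" "1 < real q ^ Suc N * \<sigma>"
    using ex_least_nat_less[of "\<lambda>i. 1 < real q ^ i * \<sigma>" n] assms by auto
  then show ?thesis
    by (auto simp: not_less)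
qed

lemma sum_Sigma_sum_slices_le:
  fixes \<sigma> x :: real
  assumes "p (Suc n) > 1" "\<And>k. k \<in> smooth_set n p \<Longrightarrow> coprime k (p (Suc n))"
    and "0 < \<sigma>" "finite Cs"
  shows "(\<Sum>c\<in>Cs. Sigma_sum n p (\<sigma> * real (p (Suc n)) ^ c) (real (p (Suc n)) ^ c * x))
           \<le> Sigma_sum (Suc n) p \<sigma> x"
  using sum_slices_le_sum_smooth_set_le[of p n \<sigma> Cs "\<lambda>h. dist_nint (real h * x) ^ 2"] assms
  unfolding Sigma_sum_def by (simp add: algebra_simps)

text \<open>If \<open>\<parallel>q\<^sup>c x\<parallel>\<close> has kept up with the geometric growth \<open>\<sigma> q\<^sup>c / 2\<close> but
  \<open>\<parallel>q\<^sup>c\<^sup>+\<^sup>1 x\<parallel>\<close> has not, then \<open>\<parallel>k q\<^sup>c x\<parallel> \<ge> 1/(2q)\<close> for every \<open>k \<in> S\<^sub>n(\<sigma> q\<^sup>c\<^sup>+\<^sup>1)\<close>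
  by \<open>dist_nint_mult_ge\<close>.\<close>
lemma card_le_Sigma_sum_Suc:
  fixes n c :: nat and p :: "nat \<Rightarrow> nat" and \<sigma> x :: real
  defines "q \<equiv> p (Suc n)"
  assumes gen: "coprime_generators (Suc n) p" and "0 < \<sigma>"
    and far: "\<sigma> * real q ^ c / 2 \<le> dist_nint (real q ^ c * x)"
    and near: "dist_nint (real q ^ Suc c * x) < \<sigma> * real q ^ Suc c / 2"
  shows "card (smooth_set_le n p (\<sigma> * real q ^ Suc c)) / (4 * real q ^ 2) \<le> Sigma_sum (Suc n) p \<sigma> x"
proof -
  have q: "2 \<le> q" and cop: "\<And>k. k \<in> smooth_set n p \<Longrightarrow> coprime k q"
    using coprime_generators_Suc_D[OF gen] by (auto simp: q_def)
  let ?S = "smooth_set_le n p (\<sigma> * real q ^ Suc c)"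
  have "1 / (2 * real q) \<le> dist_nint (real k * (real q ^ c * x))" if "k \<in> ?S" for k
  proof (rule dist_nint_mult_ge[OF q far])
    show "dist_nint (real q * (real q ^ c * x)) < real q * (\<sigma> * real q ^ c / 2)"
      using near by (simp add: algebra_simps)
    show "coprime k q"
      using that cop by (simp add: smooth_set_le_def)
    have "real k * dist_nint (real q * (real q ^ c * x)) \<le> real k * (\<sigma> * real q ^ Suc c / 2)"
      using near by (intro mult_left_mono) (auto simp: algebra_simps)
    then show "real k * dist_nint (real q * (real q ^ c * x)) \<le> 1/2"
      using that by (simp add: smooth_set_le_def)
  qed
  then have "(\<Sum>k\<in>?S. (1 / (2 * real q)) ^ 2) \<le> (\<Sum>k\<in>?S. dist_nint (real k * (real q ^ c * x)) ^ 2)"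
    using q by (intro sum_mono power_mono) auto
  also have "\<dots> \<le> Sigma_sum n p (\<sigma> * real q ^ c) (real q ^ c * x)"
    unfolding Sigma_sum_def using \<open>0 < \<sigma>\<close> q
    by (intro sum_mono2 finite_smooth_set_le smooth_set_le_antimono) auto
  also have "\<dots> \<le> Sigma_sum (Suc n) p \<sigma> x"
    using sum_Sigma_sum_slices_le[of p n \<sigma> "{c}" x] q cop \<open>0 < \<sigma>\<close> by (simp add: q_def)
  finally show ?thesis
    by (simp add: power2_eq_square)
qed

lemma all_or_first_failure:
  assumes "P 0"
  shows "(\<forall>c\<le>M. P c) \<or> (\<exists>c. Suc c \<le> M \<and> P c \<and> \<not> P (Suc c))"
proof (rule disjCI)
  assume none: "\<not> (\<exists>c. Suc c \<le> M \<and> P c \<and> \<not> P (Suc c))"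
  have "P c" if "c \<le> M" for c
    using that by (induction c) (use assms none in auto)
  then show "\<forall>c\<le>M. P c"
    by blast
qed

lemma exists_far_power:
  fixes q N :: nat and \<sigma> x :: real
  assumes q: "2 \<le> q" and x: "\<sigma>/2 \<le> dist_nint x" and N: "1 < real q ^ Suc N * \<sigma>"
  shows "\<exists>a\<le>N. 1 / (2 * real q) \<le> dist_nint (real q ^ a * x)"
proof -
  have "(\<forall>c\<le>N. \<sigma> * real q ^ c / 2 \<le> dist_nint (real q ^ c * x)) \<or>
        (\<exists>c. Suc c \<le> N \<and> \<sigma> * real q ^ c / 2 \<le> dist_nint (real q ^ c * x) \<and>
             \<not> \<sigma> * real q ^ Suc c / 2 \<le> dist_nint (real q ^ Suc c * x))"
    by (rule all_or_first_failure) (use x in simp)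
  then show ?thesis
  proof (elim disjE exE conjE)
    assume "\<forall>c\<le>N. \<sigma> * real q ^ c / 2 \<le> dist_nint (real q ^ c * x)"
    moreover have "1 / (2 * real q) \<le> \<sigma> * real q ^ N / 2"
      using N q by (simp add: field_simps)
    ultimately show ?thesis
      by fastforce
  next
    fix c assume "Suc c \<le> N" and far: "\<sigma> * real q ^ c / 2 \<le> dist_nint (real q ^ c * x)"
      and "\<not> \<sigma> * real q ^ Suc c / 2 \<le> dist_nint (real q ^ Suc c * x)"
    then have "dist_nint (real q * (real q ^ c * x)) < real q * (\<sigma> * real q ^ c / 2)"
      by (simp add: algebra_simps)
    then have "1 / (2 * real q) \<le> dist_nint (real 1 * (real q ^ c * x))"
      using dist_nint_mult_ge[OF q far, of 1] dist_nint_le_half by simp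
    then show ?thesis
      using \<open>Suc c \<le> N\<close> by (intro exI[of _ c]) auto
  qed
qed

lemma card_far_powers_le_Sigma_sum_1:
  fixes N :: nat and \<sigma> x :: real
  assumes q: "2 \<le> p 1" and "0 < \<sigma>" and N: "real (p 1) ^ N * \<sigma> \<le> 1"
  shows "card {a \<in> {0..N}. 1 / (2 * real (p 1)) \<le> dist_nint (real (p 1) ^ a * x)} / (4 * real (p 1) ^ 2)
           \<le> Sigma_sum 1 p \<sigma> x"
proof -
  define q where "q = p 1"
  define G where "G = {a \<in> {0..N}. 1 / (2 * real q) \<le> dist_nint (real q ^ a * x)}"
  have inj: "inj_on (\<lambda>a. q ^ a) G"
    using q by (auto intro!: inj_onI simp: power_inject_exp q_def)
  have sub: "(\<lambda>a. q ^ a) ` G \<subseteq> smooth_set_le 1 p \<sigma>"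
  proof clarify
    fix a assume "a \<in> G"
    then have "real q ^ a \<le> real q ^ N"
      using q by (intro power_increasing) (auto simp: G_def q_def)
    then have "real q ^ a * \<sigma> \<le> real q ^ N * \<sigma>"
      using \<open>0 < \<sigma>\<close> by (intro mult_right_mono) auto
    then have "real q ^ a * \<sigma> \<le> 1"
      using N by (simp add: q_def)
    then show "q ^ a \<in> smooth_set_le 1 p \<sigma>"
      using power_mult_mem_smooth_set[OF one_mem_smooth_set, where n=0 and p=p and c=a]
      by (simp add: smooth_set_le_def q_def)
  qed
  have "card G / (4 * real q ^ 2) = (\<Sum>a\<in>G. (1 / (2 * real q))\<^sup>2)"
    by (simp add: power2_eq_square)
  also have "\<dots> \<le> (\<Sum>a\<in>G. dist_nint (real q ^ a * x) ^ 2)"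
    using q by (intro sum_mono power_mono) (auto simp: G_def q_def)
  also have "\<dots> = (\<Sum>h\<in>(\<lambda>a. q ^ a) ` G. dist_nint (real h * x) ^ 2)"
    by (simp add: sum.reindex[OF inj])
  also have "\<dots> \<le> Sigma_sum 1 p \<sigma> x"
    unfolding Sigma_sum_def using \<open>0 < \<sigma>\<close>
    by (intro sum_mono2[OF finite_smooth_set_le sub]) auto
  finally show ?thesis
    by (simp add: G_def q_def)
qed

lemma Sigma_sum_1_lower_bound:
  fixes \<sigma> x :: real
  assumes q: "2 \<le> p 1" and \<sigma>: "0 < \<sigma>" "\<sigma> \<le> 1" and x: "\<sigma>/2 \<le> dist_nint x"
  shows "1 / (4 * real (p 1)^2) \<le> Sigma_sum 1 p \<sigma> x"
proof -
  obtain N where N: "real (p 1) ^ N * \<sigma> \<le> 1" "1 < real (p 1) ^ Suc N * \<sigma>"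
    using exists_power_bracket[OF q \<sigma>] by blast
  obtain a where "a \<le> N" "1 / (2 * real (p 1)) \<le> dist_nint (real (p 1) ^ a * x)"
    using exists_far_power[OF q x N(2)] by blast
  then have "card {a} \<le> card {a \<in> {0..N}. 1 / (2 * real (p 1)) \<le> dist_nint (real (p 1) ^ a * x)}"
    by (intro card_mono) auto
  then have "1 / (4 * real (p 1)^2)
      \<le> card {a \<in> {0..N}. 1 / (2 * real (p 1)) \<le> dist_nint (real (p 1) ^ a * x)} / (4 * real (p 1) ^ 2)"
    by (intro divide_right_mono) auto
  also have "\<dots> \<le> Sigma_sum 1 p \<sigma> x"
    using card_far_powers_le_Sigma_sum_1[of p \<sigma> N x] q \<sigma>(1) N(1) by blast
  finally show ?thesis .
qed

lemma Sigma_sum_Suc_lower_bound_all_far: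
  fixes n :: nat and p :: "nat \<Rightarrow> nat" and \<sigma> x s A :: real
  defines "q \<equiv> p (Suc n)"
  assumes gen: "coprime_generators (Suc n) p" and "1 \<le> n"
    and \<sigma>: "0 < \<sigma>" "\<sigma> \<le> s\<^sup>2" and s: "0 < s" "s \<le> 1" and "0 \<le> A"
    and IH: "\<And>\<tau> y. 0 < \<tau> \<Longrightarrow> \<tau> \<le> s \<Longrightarrow> \<tau>/2 \<le> dist_nint y \<Longrightarrow>
               A * ln (1/\<tau>) ^ (n - 1) \<le> Sigma_sum n p \<tau> y"
    and far: "\<And>c. c \<le> num_slices q \<sigma> \<Longrightarrow> \<sigma> * real q ^ c / 2 \<le> dist_nint (real q ^ c * x)"
  shows "A / (2 ^ n * ln q) * ln (1/\<sigma>) ^ n \<le> Sigma_sum (Suc n) p \<sigma> x"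
proof -
  have q: "2 \<le> q" and cop: "\<And>k. k \<in> smooth_set n p \<Longrightarrow> coprime k q"
    using coprime_generators_Suc_D[OF gen] by (auto simp: q_def)
  have "\<sigma> \<le> 1"
    using \<sigma> s power_le_one[of s 2] by linarith
  have "A * (ln (1/\<sigma>) / 2) ^ (n - 1) \<le> Sigma_sum n p (\<sigma> * real q ^ c) (real q ^ c * x)"
    if "c \<le> num_slices q \<sigma>" for c
  proof -
    note slice = slice_bounds[OF q \<sigma>(1) \<open>\<sigma> \<le> 1\<close> s(1) \<sigma>(2) that]
    have "A * (ln (1/\<sigma>) / 2) ^ (n - 1) \<le> A * ln (1 / (\<sigma> * real q ^ c)) ^ (n - 1)"
      using slice(2) \<sigma> \<open>\<sigma> \<le> 1\<close> \<open>0 \<le> A\<close> by (intro mult_left_mono power_mono) auto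
    also have "\<dots> \<le> Sigma_sum n p (\<sigma> * real q ^ c) (real q ^ c * x)"
      using IH slice(1) far[OF that] \<sigma> q by simp
    finally show ?thesis .
  qed
  then have "A / (2 ^ n * ln q) * ln (1/\<sigma>) ^ n
               \<le> (\<Sum>c\<le>num_slices q \<sigma>. Sigma_sum n p (\<sigma> * real q ^ c) (real q ^ c * x))"
    using sum_slices_lower_bound[OF q \<sigma>(1) \<open>\<sigma> \<le> 1\<close> \<open>0 \<le> A\<close>, of "n - 1"] \<open>1 \<le> n\<close> by simp
  also have "\<dots> \<le> Sigma_sum (Suc n) p \<sigma> x"
    using sum_Sigma_sum_slices_le[of p n \<sigma> "{..num_slices q \<sigma>}" x] q cop \<sigma> by (simp add: q_def)
  finally show ?thesis .
qed

text \<open>Either all slices \<open>c \<le> num_slices q \<sigma>\<close> satisfy the induction hypothesis, or at the first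
  failure \<open>c + 1\<close> the whole slice \<open>S\<^sub>n(\<sigma> q\<^sup>c\<^sup>+\<^sup>1)\<close> contributes via \<open>card_le_Sigma_sum_Suc\<close>.\<close>
lemma Sigma_sum_Suc_lower_bound:
  fixes n :: nat and p :: "nat \<Rightarrow> nat" and \<sigma> x s A C :: real
  defines "q \<equiv> p (Suc n)"
  assumes gen: "coprime_generators (Suc n) p" and "1 \<le> n"
    and \<sigma>: "0 < \<sigma>" "\<sigma> \<le> s\<^sup>2" and s: "0 < s" "s \<le> 1" and "0 \<le> A" "0 \<le> C"
    and x: "\<sigma>/2 \<le> dist_nint x"
    and IH: "\<And>\<tau> y. 0 < \<tau> \<Longrightarrow> \<tau> \<le> s \<Longrightarrow> \<tau>/2 \<le> dist_nint y \<Longrightarrow>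
               A * ln (1/\<tau>) ^ (n - 1) \<le> Sigma_sum n p \<tau> y"
    and count: "\<And>\<tau>. 0 < \<tau> \<Longrightarrow> \<tau> \<le> s \<Longrightarrow> C * ln (1/\<tau>) ^ n \<le> card (smooth_set_le n p \<tau>)"
  shows "min (A / (2 ^ n * ln q)) (C / (2 ^ n * (4 * real q ^ 2))) * ln (1/\<sigma>) ^ n
           \<le> Sigma_sum (Suc n) p \<sigma> x"
proof -
  have q: "2 \<le> q"
    using coprime_generators_Suc_D[OF gen] by (simp add: q_def)
  have "\<sigma> \<le> 1"
    using \<sigma> s power_le_one[of s 2] by linarith
  define L where "L = ln (1/\<sigma>)"
  let ?far = "\<lambda>c. \<sigma> * real q ^ c / 2 \<le> dist_nint (real q ^ c * x)"
  have "(\<forall>c\<le>num_slices q \<sigma>. ?far c) \<or> (\<exists>c. Suc c \<le> num_slices q \<sigma> \<and> ?far c \<and> \<not> ?far (Suc c))"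
    by (rule all_or_first_failure) (use x in simp)
  then have "A / (2 ^ n * ln q) * L ^ n \<le> Sigma_sum (Suc n) p \<sigma> x \<or>
             C / (2 ^ n * (4 * real q ^ 2)) * L ^ n \<le> Sigma_sum (Suc n) p \<sigma> x"
  proof (elim disjE exE conjE)
    assume "\<forall>c\<le>num_slices q \<sigma>. ?far c"
    then show ?thesis
      using Sigma_sum_Suc_lower_bound_all_far[OF gen \<open>1 \<le> n\<close> \<sigma> s \<open>0 \<le> A\<close> IH]
      by (simp add: q_def L_def)
  next
    fix c assume c: "Suc c \<le> num_slices q \<sigma>" "?far c" "\<not> ?far (Suc c)"
    note slice = slice_bounds[OF q \<sigma>(1) \<open>\<sigma> \<le> 1\<close> s(1) \<sigma>(2) c(1)]
    have "C / (2 ^ n * (4 * real q ^ 2)) * L ^ n = C * (L/2) ^ n / (4 * real q ^ 2)"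
      by (simp add: power_divide)
    also have "\<dots> \<le> C * ln (1 / (\<sigma> * real q ^ Suc c)) ^ n / (4 * real q ^ 2)"
      using slice(2) \<sigma> \<open>\<sigma> \<le> 1\<close> \<open>0 \<le> C\<close>
      by (intro divide_right_mono mult_left_mono power_mono) (auto simp: L_def)
    also have "\<dots> \<le> card (smooth_set_le n p (\<sigma> * real q ^ Suc c)) / (4 * real q ^ 2)"
      using count slice(1) \<sigma> q by (intro divide_right_mono) auto
    also have "\<dots> \<le> Sigma_sum (Suc n) p \<sigma> x"
      using card_le_Sigma_sum_Suc[OF gen \<sigma>(1)] c by (simp add: q_def not_le)
    finally show ?thesis
      by blast
  qed
  moreover have "0 \<le> L ^ n"
    using \<sigma> \<open>\<sigma> \<le> 1\<close> by (simp add: L_def)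
  ultimately show ?thesis
    by (simp add: min_mult_distrib_right min_le_iff_disj L_def)
qed

lemma Sigma_sum_lower_bound:
  assumes "1 \<le> n" "coprime_generators n p"
  shows "\<exists>A>0. \<forall>\<^sub>F \<sigma> in at_right 0. \<forall>x. \<sigma>/2 \<le> dist_nint x \<longrightarrow>
           A * ln (1/\<sigma>) ^ (n - 1) \<le> Sigma_sum n p \<sigma> x"
  using assms
proof (induction n rule: nat_induct_at_least)
  case base
  then have "2 \<le> p 1"
    by (simp add: coprime_generators_def)
  then have "\<forall>x. \<sigma>/2 \<le> dist_nint x \<longrightarrow> 1 / (4 * real (p 1)^2) * ln (1/\<sigma>) ^ (1 - 1) \<le> Sigma_sum 1 p \<sigma> x"
    if "\<sigma> \<in> {0<..<1}" for \<sigma>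
    using Sigma_sum_1_lower_bound[of p \<sigma>] that by simp
  then show ?case
    using \<open>2 \<le> p 1\<close> by (intro exI[of _ "1 / (4 * real (p 1)^2)"] conjI eventually_at_rightI[of 0 1]) auto
next
  case (Suc n)
  define q where "q = p (Suc n)"
  have gen: "coprime_generators n p" and "2 \<le> q"
    using coprime_generators_Suc_D[OF Suc.prems] by (auto simp: q_def)
  obtain A b where "A > 0" "b > 0" and IH: "\<And>\<tau> y. 0 < \<tau> \<Longrightarrow> \<tau> < b \<Longrightarrow> \<tau>/2 \<le> dist_nint y \<Longrightarrow>
      A * ln (1/\<tau>) ^ (n - 1) \<le> Sigma_sum n p \<tau> y"
    using Suc.IH[OF gen] by (auto simp: eventually_at_right_field)
  obtain C b' where "C > 0" "b' > 0"
    and count: "\<And>\<tau>. 0 < \<tau> \<Longrightarrow> \<tau> < b' \<Longrightarrow> C * ln (1/\<tau>) ^ n \<le> card (smooth_set_le n p \<tau>)"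
    using card_smooth_set_le_lower_bound[OF gen] by (auto simp: eventually_at_right_field)
  define s where "s = min (min b b' / 2) 1"
  have s: "0 < s" "s < b" "s < b'" "s \<le> 1"
    using \<open>b > 0\<close> \<open>b' > 0\<close> by (auto simp: s_def)
  define A' where "A' = min (A / (2 ^ n * ln q)) (C / (2 ^ n * (4 * real q ^ 2)))"
  have "A' > 0"
    using \<open>A > 0\<close> \<open>C > 0\<close> \<open>2 \<le> q\<close> by (simp add: A'_def)
  moreover have "A' * ln (1/\<sigma>) ^ (Suc n - 1) \<le> Sigma_sum (Suc n) p \<sigma> x"
    if "\<sigma> \<in> {0<..<s\<^sup>2}" "\<sigma>/2 \<le> dist_nint x" for \<sigma> x
    using Sigma_sum_Suc_lower_bound[OF Suc.prems Suc.hyps _ _ s(1,4), of \<sigma> A C x] IH count s that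
      \<open>A > 0\<close> \<open>C > 0\<close>
    by (simp add: A'_def q_def)
  ultimately show ?case
    using s by (intro exI[of _ A'] conjI eventually_at_rightI[of 0 "s\<^sup>2"]) auto
qed

lemma Sigma_sum_eq_quadratic:
  assumes "0 < r" "\<bar>y\<bar> \<le> r/2"
  shows "Sigma_sum n p r y = y\<^sup>2 * (\<Sum>h\<in>smooth_set_le n p r. real h ^ 2)"
  unfolding Sigma_sum_def sum_distrib_left
proof (rule sum.cong[OF refl])
  fix h assume "h \<in> smooth_set_le n p r"
  then have "real h * r \<le> 1"
    by (simp add: smooth_set_le_def)
  moreover have "real h * \<bar>y\<bar> \<le> real h * (r/2)"
    using assms by (intro mult_left_mono) auto
  ultimately have "\<bar>real h * y\<bar> \<le> 1/2"
    by (simp add: abs_mult)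
  then show "dist_nint (real h * y) ^ 2 = y\<^sup>2 * real h ^ 2"
    by (simp add: dist_nint_eq_abs power_mult_distrib)
qed

lemma Sigma_sum_lower_bounds:
  assumes "1 \<le> m" "coprime_generators m p"
  shows "\<exists>A1>0. \<exists>A2>0. \<exists>rs>0. \<forall>r. 0 < r \<and> r < rs \<longrightarrow>
            (\<forall>y::real. \<bar>y\<bar> \<le> r / 2 \<longrightarrow>
               Sigma_sum m p r y \<ge> A1 * (y / r)^2 * (ln (1 / r)) ^ (m - 1)) \<and>
            (\<forall>y::real. r / 2 \<le> \<bar>y\<bar> \<and> \<bar>y\<bar> \<le> 1 / 2 \<longrightarrow>
               Sigma_sum m p r y \<ge> A2 * (ln (1 / r)) ^ (m - 1))"
proof -
  obtain A b where "A > 0" "b > 0" and lower: "\<And>r y. 0 < r \<Longrightarrow> r < b \<Longrightarrow> r/2 \<le> dist_nint y \<Longrightarrow>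
      A * ln (1/r) ^ (m - 1) \<le> Sigma_sum m p r y"
    using Sigma_sum_lower_bound[OF assms] by (auto simp: eventually_at_right_field)
  have "A * (y / r)^2 * ln (1 / r) ^ (m - 1) \<le> Sigma_sum m p r y"
    if r: "0 < r" "r < min b 1" and y: "\<bar>y\<bar> \<le> r/2" for r y
  proof -
    have "0 \<le> A * ln (1 / r) ^ (m - 1)"
      using r \<open>A > 0\<close> by simp
    moreover have "A * ln (1/r) ^ (m - 1) \<le> Sigma_sum m p r (r/2)"
      using lower[of r "r/2"] r by (simp add: dist_nint_eq_abs)
    ultimately have "(2 * y / r)\<^sup>2 * (A * ln (1 / r) ^ (m - 1)) \<le> (2 * y / r)\<^sup>2 * Sigma_sum m p r (r/2)"
      by (intro mult_left_mono) auto
    also have "\<dots> = Sigma_sum m p r y"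
      using r y by (simp add: Sigma_sum_eq_quadratic power2_eq_square)
    moreover have "(y / r)\<^sup>2 \<le> (2 * y / r)\<^sup>2"
      by (simp add: power_divide divide_right_mono)
    ultimately show ?thesis
      using mult_right_mono[OF \<open>(y / r)\<^sup>2 \<le> _\<close> \<open>0 \<le> A * ln (1 / r) ^ (m - 1)\<close>] by (simp add: ac_simps)
  qed
  moreover have "A * ln (1 / r) ^ (m - 1) \<le> Sigma_sum m p r y"
    if "0 < r" "r < min b 1" "r/2 \<le> \<bar>y\<bar>" "\<bar>y\<bar> \<le> 1/2" for r y
    using lower[of r y] that by (simp add: dist_nint_eq_abs)
  ultimately show ?thesis
    using \<open>A > 0\<close> \<open>b > 0\<close> by (intro exI[of _ A] exI[of _ "min b 1"] conjI allI impI) auto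
qed

section \<open>Sparse base-\<open>q\<close> expansions\<close>

lemma abs_round_mult_sub_le:
  fixes q :: nat and y :: real
  assumes "1 \<le> q"
  shows "\<bar>round (q * y) - q * round y\<bar> \<le> q"
proof -
  have "\<bar>y - round y\<bar> \<le> 1/2"
    using of_int_round_abs_le[of y] by (simp add: abs_minus_commute)
  then have "\<bar>q * (y - round y)\<bar> \<le> q * (1/2)"
    unfolding abs_mult abs_of_nat by (intro mult_left_mono) auto
  moreover have "\<bar>q * y - round (q * y)\<bar> \<le> 1/2"
    using of_int_round_abs_le[of "q * y"] by (simp add: abs_minus_commute)
  moreover have "real_of_int (round (q * y) - q * round y) = q * (y - round y) - (q * y - round (q * y))"
    by (simp add: algebra_simps)
  ultimately have "\<bar>real_of_int (round (q * y) - q * round y)\<bar> < q + 1"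
    using abs_triangle_ineq4[of "q * (y - round y)" "q * y - round (q * y)"] by linarith
  then show ?thesis
    by linarith
qed

lemma round_mult_eq:
  fixes q :: nat and y :: real
  assumes "2 \<le> q" "dist_nint y < 1 / (2 * real q)" "dist_nint (q * y) < 1 / (2 * real q)"
  shows "round (q * y) = q * round y"
proof -
  have "q * \<bar>y - round y\<bar> < q * (1 / (2 * real q))"
    using assms(1,2) by (intro mult_strict_left_mono) (auto simp: dist_nint_eq_abs_round)
  then have "\<bar>q * (y - round y)\<bar> < 1/2"
    using assms(1) by (simp add: abs_mult)
  moreover have "1/(2 * real q) \<le> 1/4"
    using assms(1) by (simp add: field_simps)
  moreover have "real_of_int (round (q * y) - q * round y) = q * (y - round y) - (q * y - round (q * y))"
    by (simp add: algebra_simps)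
  ultimately have "\<bar>real_of_int (round (q * y) - q * round y)\<bar> < 1"
    using assms(3) abs_triangle_ineq4[of "q * (y - round y)" "q * y - round (q * y)"]
    unfolding dist_nint_eq_abs_round by linarith
  then show ?thesis
    by linarith
qed

lemma base_expansion_telescope:
  fixes R :: "nat \<Rightarrow> int" and q :: int
  shows "R N = q ^ N * R 0 + (\<Sum>a<N. (R (Suc a) - q * R a) * q ^ (N - 1 - a))"
proof (induction N)
  case (Suc N)
  have "(\<Sum>a<N. (R (Suc a) - q * R a) * q ^ (Suc N - 1 - a))
          = q * (\<Sum>a<N. (R (Suc a) - q * R a) * q ^ (N - 1 - a))"
    unfolding sum_distrib_left by (intro sum.cong refl) (simp add: Suc_diff_Suc power_Suc[symmetric])
  then show ?case
    using Suc.IH by (simp add: algebra_simps)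
qed simp

text \<open>Integers \<open>\<Sum> e\<^sub>a q\<^sup>N\<^sup>-\<^sup>1\<^sup>-\<^sup>a\<close> with at most \<open>2J\<close> nonzero digits \<open>e\<^sub>a \<in> [-q, q]\<close>, encoded by the
  list of pairs \<open>(a, e\<^sub>a)\<close>; the padding pair \<open>(0, 0)\<close> is why positions range over \<open>{0..N}\<close>.\<close>
definition digit_sums :: "nat \<Rightarrow> nat \<Rightarrow> nat \<Rightarrow> int set" where
  "digit_sums q N J = (\<lambda>xs. sum_list (map (\<lambda>(a, e). e * int q ^ (N - 1 - a)) xs)) `
      {xs. set xs \<subseteq> {0..N} \<times> {-int q..int q} \<and> length xs = 2 * J}"

lemma finite_digit_sums: "finite (digit_sums q N J)"
  unfolding digit_sums_def by (intro finite_imageI finite_lists_length_eq) auto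

lemma card_digit_sums_le: "card (digit_sums q N J) \<le> ((N + 1) * (2 * q + 1)) ^ (2 * J)"
proof -
  let ?A = "{0..N} \<times> {-int q..int q}"
  have "nat (2 * int q + 1) = 2 * q + 1"
    by simp
  then have "card ?A = (N + 1) * (2 * q + 1)"
    by (simp add: card_cartesian_product del: nat_int_add)
  moreover have "card {xs. set xs \<subseteq> ?A \<and> length xs = 2 * J} = card ?A ^ (2 * J)"
    by (rule card_lists_length_eq) simp
  moreover have "card (digit_sums q N J) \<le> card {xs. set xs \<subseteq> ?A \<and> length xs = 2 * J}"
    unfolding digit_sums_def by (intro card_image_le finite_lists_length_eq) simp
  ultimately show ?thesis
    by simp
qed

lemma sum_mem_digit_sums:
  fixes d :: "nat \<Rightarrow> int"
  assumes card: "card {a. a < N \<and> d a \<noteq> 0} \<le> 2 * J" and d: "\<And>a. \<bar>d a\<bar> \<le> int q"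
  shows "(\<Sum>a<N. d a * int q ^ (N - 1 - a)) \<in> digit_sums q N J"
proof -
  define T where "T = {a. a < N \<and> d a \<noteq> 0}"
  have "finite T"
    by (simp add: T_def)
  define xs where "xs = map (\<lambda>a. (a, d a)) (sorted_list_of_set T) @ replicate (2 * J - card T) (0, 0)"
  have "length xs = 2 * J"
    using card \<open>finite T\<close> by (simp add: xs_def T_def)
  moreover have "set xs \<subseteq> {0..N} \<times> {-int q..int q}"
  proof -
    have "d a \<in> {-int q..int q}" for a
      using d[of a] by auto
    then show ?thesis
      using \<open>finite T\<close> by (auto simp: xs_def T_def)
  qed
  moreover have "sum_list (map (\<lambda>(a, e). e * int q ^ (N - 1 - a)) xs) = (\<Sum>a<N. d a * int q ^ (N - 1 - a))"
  proof -
    have "sum_list (map (\<lambda>(a, e). e * int q ^ (N - 1 - a)) xs) = (\<Sum>a\<in>T. d a * int q ^ (N - 1 - a))"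
      using \<open>finite T\<close> by (simp add: xs_def sum_list_distinct_conv_sum_set comp_def sum_list_replicate)
    also have "\<dots> = (\<Sum>a<N. d a * int q ^ (N - 1 - a))"
      by (rule sum.mono_neutral_left) (auto simp: T_def)
    finally show ?thesis .
  qed
  ultimately show ?thesis
    unfolding digit_sums_def by (metis (mono_tags, lifting) image_eqI mem_Collect_eq)
qed

text \<open>If \<open>\<parallel>q\<^sup>a x\<parallel> < 1/(2q)\<close> for two consecutive \<open>a\<close>, the nearest integers satisfy
  \<open>R\<^sub>a\<^sub>+\<^sub>1 = q R\<^sub>a\<close>; so the base-\<open>q\<close> expansion of \<open>R\<^sub>N \<approx> q\<^sup>N x\<close> relative to \<open>q\<^sup>N R\<^sub>0\<close> has
  at most two nonzero digits per index \<open>a\<close> with \<open>\<parallel>q\<^sup>a x\<parallel> \<ge> 1/(2q)\<close>.\<close>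
lemma near_digit_sum_if_few_far_powers:
  fixes q N J :: nat and x :: real
  assumes q: "2 \<le> q" and few: "card {a \<in> {0..N}. 1 / (2 * real q) \<le> dist_nint (real q ^ a * x)} < J"
  shows "\<exists>D\<in>digit_sums q N J. \<bar>real q ^ N * x - (real q ^ N * of_int (round x) + of_int D)\<bar> \<le> 1/2"
proof -
  define G where "G = {a \<in> {0..N}. 1 / (2 * real q) \<le> dist_nint (real q ^ a * x)}"
  define R where "R a = round (real q ^ a * x)" for a
  define d where "d a = R (Suc a) - int q * R a" for a
  have d_bound: "\<bar>d a\<bar> \<le> int q" for a
    using abs_round_mult_sub_le[of q "real q ^ a * x"] q by (simp add: d_def R_def mult.assoc)
  have "{a. a < N \<and> d a \<noteq> 0} \<subseteq> G \<union> (\<lambda>b. b - 1) ` G"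
  proof
    fix a assume a: "a \<in> {a. a < N \<and> d a \<noteq> 0}"
    show "a \<in> G \<union> (\<lambda>b. b - 1) ` G"
    proof (cases "a \<in> G")
      case False
      then have "\<not> dist_nint (real q ^ Suc a * x) < 1 / (2 * real q)"
        using a round_mult_eq[OF q, of "real q ^ a * x"] by (auto simp: G_def d_def R_def mult.assoc)
      then have "Suc a \<in> G"
        using a by (auto simp: G_def)
      then show ?thesis
        by (metis UnI2 diff_Suc_1 image_eqI)
    qed simp
  qed
  then have "card {a. a < N \<and> d a \<noteq> 0} \<le> card (G \<union> (\<lambda>b. b - 1) ` G)"
    by (intro card_mono) (auto simp: G_def)
  also have "\<dots> \<le> 2 * J"
    using card_Un_le[of G "(\<lambda>b. b - 1) ` G"] card_image_le[of G "\<lambda>b. b - 1"] few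
    by (simp add: G_def)
  finally have D: "(\<Sum>a<N. d a * int q ^ (N - 1 - a)) \<in> digit_sums q N J"
    using sum_mem_digit_sums d_bound by blast
  have "R N = int q ^ N * round x + (\<Sum>a<N. d a * int q ^ (N - 1 - a))"
    using base_expansion_telescope[of R N "int q"] by (simp add: d_def R_def)
  moreover have "\<bar>real q ^ N * x - R N\<bar> \<le> 1/2"
    using of_int_round_abs_le[of "real q ^ N * x"] by (simp add: R_def abs_minus_commute)
  ultimately show ?thesis
    using D by (intro bexI[of _ "\<Sum>a<N. d a * int q ^ (N - 1 - a)"]) auto
qed

section \<open>The exceptional set in part (c)\<close>

lemma measure_near_integers_le:
  fixes Z :: "int set" and M :: real
  assumes "finite Z" "0 < M"
  shows "{y. \<exists>z\<in>Z. \<bar>M * y - of_int z\<bar> \<le> 1/2} \<in> lmeasurable"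
    and "measure lebesgue {y. \<exists>z\<in>Z. \<bar>M * y - of_int z\<bar> \<le> 1/2} \<le> card Z / M"
proof -
  define I where "I z = {(of_int z - 1/2) / M .. (of_int z + 1/2) / M}" for z :: int
  have "y \<in> I z \<longleftrightarrow> of_int z - 1/2 \<le> M * y \<and> M * y \<le> of_int z + 1/2" for y z
    using assms(2) by (simp add: I_def pos_divide_le_eq pos_le_divide_eq mult.commute)
  then have "y \<in> I z \<longleftrightarrow> \<bar>M * y - of_int z\<bar> \<le> 1/2" for y z
    by (simp only: abs_diff_le_iff)
  then have eq: "{y. \<exists>z\<in>Z. \<bar>M * y - of_int z\<bar> \<le> 1/2} = (\<Union>z\<in>Z. I z)"
    by blast
  show "{y. \<exists>z\<in>Z. \<bar>M * y - of_int z\<bar> \<le> 1/2} \<in> lmeasurable"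
    unfolding eq I_def using assms(1) by (intro fmeasurable.finite_UN) auto
  have "measure lebesgue (\<Union>z\<in>Z. I z) \<le> (\<Sum>z\<in>Z. measure lebesgue (I z))"
    using assms(1) by (intro measure_UNION_le) (auto simp: I_def)
  also have "\<dots> = card Z / M"
    using assms(2) by (simp add: I_def measure_completion field_simps)
  finally show "measure lebesgue {y. \<exists>z\<in>Z. \<bar>M * y - of_int z\<bar> \<le> 1/2} \<le> card Z / M"
    unfolding eq .
qed

definition near_digit_sums :: "nat \<Rightarrow> nat \<Rightarrow> nat \<Rightarrow> nat \<Rightarrow> nat \<Rightarrow> real set" where
  "near_digit_sums q Q N J c = {y. \<exists>R D. \<bar>R\<bar> \<le> int Q ^ c \<and> D \<in> digit_sums q N J \<and>
      \<bar>real q ^ N * (real Q ^ c * y) - (real q ^ N * of_int R + of_int D)\<bar> \<le> 1/2}"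

lemma mem_near_digit_sums_if_few_far_powers:
  fixes q Q N J c :: nat and y :: real
  assumes q: "2 \<le> q" and Q: "1 \<le> Q" and y: "\<bar>y\<bar> \<le> 1/2"
    and few: "card {a \<in> {0..N}. 1 / (2 * real q) \<le> dist_nint (real q ^ a * (real Q ^ c * y))} < J"
  shows "y \<in> near_digit_sums q Q N J c"
proof -
  define R where "R = round (real Q ^ c * y)"
  have "\<bar>real Q ^ c * y\<bar> = real Q ^ c * \<bar>y\<bar>"
    by (simp add: abs_mult)
  then have "\<bar>real Q ^ c * y\<bar> \<le> real Q ^ c * (1/2)"
    using y mult_left_mono[OF y, of "real Q ^ c"] by simp
  moreover have "\<bar>of_int R - real Q ^ c * y\<bar> \<le> 1/2"
    unfolding R_def by (rule of_int_round_abs_le)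
  moreover have "1 \<le> real Q ^ c"
    using Q by simp
  moreover have "\<bar>real_of_int R\<bar> \<le> \<bar>of_int R - real Q ^ c * y\<bar> + \<bar>real Q ^ c * y\<bar>"
    using abs_triangle_ineq[of "of_int R - real Q ^ c * y" "real Q ^ c * y"] by simp
  ultimately have "\<bar>real_of_int R\<bar> \<le> real_of_int (int Q ^ c)"
    by simp
  then have "\<bar>R\<bar> \<le> int Q ^ c"
    by linarith
  then show ?thesis
    using near_digit_sum_if_few_far_powers[OF q few]
    unfolding near_digit_sums_def R_def by blast
qed

lemma measure_near_digit_sums_le:
  fixes q Q N J c :: nat
  assumes "2 \<le> q" "1 \<le> Q"
  shows "near_digit_sums q Q N J c \<in> lmeasurable"
    and "measure lebesgue (near_digit_sums q Q N J c) \<le> 3 * ((real N + 1) * (2 * real q + 1)) ^ (2 * J) / real q ^ N"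
proof -
  define Z where "Z = (\<lambda>(R, D). int q ^ N * R + D) ` ({- (int Q ^ c)..int Q ^ c} \<times> digit_sums q N J)"
  define M where "M = real q ^ N * real Q ^ c"
  have "0 < M"
    using assms by (simp add: M_def)
  have "finite Z"
    by (simp add: Z_def finite_digit_sums)
  have eq: "near_digit_sums q Q N J c = {y. \<exists>z\<in>Z. \<bar>M * y - of_int z\<bar> \<le> 1/2}"
    unfolding near_digit_sums_def Z_def M_def by (auto simp: abs_le_iff algebra_simps)
  show "near_digit_sums q Q N J c \<in> lmeasurable"
    unfolding eq by (rule measure_near_integers_le[OF \<open>finite Z\<close> \<open>0 < M\<close>])
  have "card Z \<le> card ({- (int Q ^ c)..int Q ^ c} \<times> digit_sums q N J)"
    unfolding Z_def by (intro card_image_le) (simp add: finite_digit_sums)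
  also have "\<dots> = (2 * Q ^ c + 1) * card (digit_sums q N J)"
    by (simp add: card_cartesian_product nat_add_distrib nat_mult_distrib nat_power_eq)
  also have "\<dots> \<le> 3 * Q ^ c * ((N + 1) * (2 * q + 1)) ^ (2 * J)"
    using card_digit_sums_le[of q N J] assms
    by (intro mult_mono) (auto simp: one_le_power)
  finally have "real (card Z) \<le> real (3 * Q ^ c * ((N + 1) * (2 * q + 1)) ^ (2 * J))"
    by (rule of_nat_mono)
  then have "real (card Z) \<le> 3 * real Q ^ c * ((real N + 1) * (2 * real q + 1)) ^ (2 * J)"
    by (simp only: of_nat_mult of_nat_power of_nat_add of_nat_1 of_nat_numeral)
  then have "real (card Z) / M \<le> 3 * real Q ^ c * ((real N + 1) * (2 * real q + 1)) ^ (2 * J) / M"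
    using \<open>0 < M\<close> by (intro divide_right_mono) auto
  also have "\<dots> = 3 * ((real N + 1) * (2 * real q + 1)) ^ (2 * J) / real q ^ N"
    using assms by (simp add: M_def)
  finally show "measure lebesgue (near_digit_sums q Q N J c) \<le> 3 * ((real N + 1) * (2 * real q + 1)) ^ (2 * J) / real q ^ N"
    using measure_near_integers_le(2)[OF \<open>finite Z\<close> \<open>0 < M\<close>] unfolding eq by linarith
qed

lemma Sigma_sum_2_lower_bound:
  fixes p N :: "nat \<Rightarrow> nat" and r y :: real and C0 J :: nat
  defines "q \<equiv> p 1" and "Q \<equiv> p 2"
  assumes gen: "coprime_generators 2 p" and "0 < r"
    and N: "\<And>c. c \<le> C0 \<Longrightarrow> real q ^ N c * (r * real Q ^ c) \<le> 1"
    and many: "\<And>c. c \<le> C0 \<Longrightarrow>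
                 J \<le> card {a \<in> {0..N c}. 1 / (2 * real q) \<le> dist_nint (real q ^ a * (real Q ^ c * y))}"
  shows "(real C0 + 1) * real J / (4 * real q ^ 2) \<le> Sigma_sum 2 p r y"
proof -
  have gen2: "coprime_generators (Suc 1) p"
    using gen by (simp add: numeral_2_eq_2)
  have q: "2 \<le> q" and Q: "1 < Q" and cop: "\<And>k. k \<in> smooth_set 1 p \<Longrightarrow> coprime k Q"
    using coprime_generators_Suc_D[OF gen2]
    by (auto simp: q_def Q_def coprime_generators_def numeral_2_eq_2)
  have "J / (4 * real q ^ 2) \<le> Sigma_sum 1 p (r * real Q ^ c) (real Q ^ c * y)" if "c \<le> C0" for c
  proof -
    have "J / (4 * real q ^ 2)
            \<le> card {a \<in> {0..N c}. 1 / (2 * real q) \<le> dist_nint (real q ^ a * (real Q ^ c * y))}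
                / (4 * real q ^ 2)"
      using many[OF that] by (intro divide_right_mono) auto
    also have "\<dots> \<le> Sigma_sum 1 p (r * real Q ^ c) (real Q ^ c * y)"
      using card_far_powers_le_Sigma_sum_1[of p "r * real Q ^ c" "N c"] q Q N[OF that] \<open>0 < r\<close>
      by (simp add: q_def)
    finally show ?thesis .
  qed
  then have "(\<Sum>c\<le>C0. J / (4 * real q ^ 2))
               \<le> (\<Sum>c\<le>C0. Sigma_sum 1 p (r * real Q ^ c) (real Q ^ c * y))"
    by (intro sum_mono) simp
  also have "\<dots> \<le> Sigma_sum 2 p r y"
    using sum_Sigma_sum_slices_le[of p 1 r "{..C0}" y] Q cop \<open>0 < r\<close>
    by (simp add: Q_def numeral_2_eq_2)
  finally show ?thesis
    by (simp add: algebra_simps)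
qed

lemma ln_power_mult_powr_le:
  fixes \<eta> r a :: real and k :: nat
  assumes "0 < \<eta>" "1 \<le> k" "0 < r" "r \<le> 1"
  shows "(ln (1/r) + 1) ^ k * r powr a \<le> (k / \<eta>) ^ k * exp \<eta> * r powr (a - \<eta>)"
proof -
  define x where "x = \<eta> * (ln (1/r) + 1)"
  have "0 \<le> x"
    using assms by (simp add: x_def)
  have "x / k \<le> exp (x / k)"
    using exp_ge_add_one_self[of "x / k"] by linarith
  then have "(x / k) ^ k \<le> exp (x / k) ^ k"
    using \<open>0 \<le> x\<close> by (intro power_mono) auto
  also have "\<dots> = exp x"
    using assms(2) by (simp add: exp_of_nat_mult[symmetric])
  also have "\<dots> = exp \<eta> * r powr (- \<eta>)"
    using assms(3) by (simp add: x_def powr_def ln_div exp_add[symmetric] algebra_simps)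
  finally have "(x / k) ^ k \<le> exp \<eta> * r powr (- \<eta>)" .
  moreover have "(x / k) ^ k = (\<eta> / k) ^ k * (ln (1/r) + 1) ^ k"
    by (simp add: x_def power_mult_distrib[symmetric] field_simps)
  ultimately have "(ln (1/r) + 1) ^ k \<le> (k / \<eta>) ^ k * exp \<eta> * r powr (- \<eta>)"
    using assms by (simp add: power_divide field_simps)
  then have "(ln (1/r) + 1) ^ k * r powr a \<le> (k / \<eta>) ^ k * exp \<eta> * r powr (- \<eta>) * r powr a"
    by (rule mult_right_mono) simp
  then show ?thesis
    by (simp add: powr_add[symmetric] mult.assoc)
qed

lemma power_le_powr_if_ln_le:
  fixes Q c :: nat and r dd :: real
  assumes Q: "1 \<le> Q" and r: "0 < r" and c: "real c * ln Q \<le> dd * ln (1/r)"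
  shows "real Q ^ c \<le> r powr (- dd)"
proof -
  have "ln (real Q ^ c) \<le> ln (r powr (- dd))"
    using c Q r by (simp add: ln_realpow ln_powr ln_div)
  then show ?thesis
    using ln_le_cancel_iff[of "real Q ^ c" "r powr (- dd)"] Q r by simp
qed

lemma power_bracket_bounds:
  fixes q Q c N :: nat and r dd :: real
  assumes q: "2 \<le> q" and Q: "1 \<le> Q" and r: "0 < r" "r < 1"
    and c: "real c * ln Q \<le> dd * ln (1/r)"
    and N: "real q ^ N * (r * real Q ^ c) \<le> 1" "1 < real q ^ Suc N * (r * real Q ^ c)"
  shows "real N + 1 \<le> 2 * (ln (1/r) + 1)" and "1 / real q ^ N \<le> real q * r powr (1 - dd)"
proof -
  have Qc: "real Q ^ c \<le> r powr (- dd)"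
    using power_le_powr_if_ln_le[OF Q r(1) c] .
  have "r \<le> r * real Q ^ c"
    using Q r by (simp add: one_le_power)
  then have "real q ^ N * r \<le> 1"
    using mult_left_mono[OF \<open>r \<le> r * real Q ^ c\<close>, of "real q ^ N"] N(1) by simp
  then have "real q ^ N \<le> 1/r"
    using r by (simp add: field_simps)
  then have "real N * ln q \<le> ln (1/r)"
    using q r by (metis ln_le_cancel_iff ln_realpow of_nat_0_less_iff zero_less_divide_1_iff
      zero_less_numeral order_less_le_trans zero_less_power)
  moreover have "ln 2 \<le> ln (real q)"
    using q by simp
  then have "1/2 < ln (real q)"
    using ln2_ge_two_thirds by linarith
  moreover have "0 \<le> ln (1/r)"
    using r by simp
  ultimately have "real N / 2 \<le> ln (1/r)"
    using mult_left_mono[of "1/2" "ln (real q)" "real N"] by linarith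
  then show "real N + 1 \<le> 2 * (ln (1/r) + 1)"
    by (simp add: field_simps)
  have "real q ^ Suc N * (r * real Q ^ c) \<le> real q ^ Suc N * (r * r powr (- dd))"
    using Qc r by (intro mult_left_mono) auto
  then have "1 < real q ^ Suc N * (r * r powr (- dd))"
    using N(2) by linarith
  also have "r * r powr (- dd) = r powr (1 - dd)"
    using r by (simp add: powr_diff powr_minus field_simps)
  finally show "1 / real q ^ N \<le> real q * r powr (1 - dd)"
    using q by (simp add: field_simps)
qed

lemma measure_UN_near_digit_sums_le:
  fixes q Q J M :: nat and N :: "nat \<Rightarrow> nat" and r dd L :: real
  defines "L \<equiv> ln (1/r)"
  assumes q: "2 \<le> q" and Q: "1 \<le> Q" and r: "0 < r" "r < 1" and M: "real M \<le> L"
    and c: "\<And>c. c \<le> M \<Longrightarrow> real c * ln Q \<le> dd * L"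
    and N: "\<And>c. c \<le> M \<Longrightarrow> real q ^ N c * (r * real Q ^ c) \<le> 1"
      "\<And>c. c \<le> M \<Longrightarrow> 1 < real q ^ Suc (N c) * (r * real Q ^ c)"
  shows "measure lebesgue (\<Union>c\<le>M. near_digit_sums q Q (N c) J c)
           \<le> 3 * real q * (4 * real q + 2) ^ (2 * J) * (L + 1) ^ (2 * J + 1) * r powr (1 - dd)"
proof -
  define T where "T = 3 * real q * (4 * real q + 2) ^ (2 * J) * (L + 1) ^ (2 * J) * r powr (1 - dd)"
  have "measure lebesgue (near_digit_sums q Q (N c) J c) \<le> T" if "c \<le> M" for c
  proof -
    note b = power_bracket_bounds[OF q Q r c[OF that, unfolded L_def] N(1,2)[OF that]]
    have "((real (N c) + 1) * (2 * real q + 1)) ^ (2 * J) \<le> (2 * (L + 1) * (2 * real q + 1)) ^ (2 * J)"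
      using b(1) unfolding L_def by (intro power_mono mult_right_mono) auto
    moreover have "0 \<le> ((real (N c) + 1) * (2 * real q + 1)) ^ (2 * J)"
      by simp
    ultimately have "3 * ((real (N c) + 1) * (2 * real q + 1)) ^ (2 * J) * (1 / real q ^ N c)
                       \<le> 3 * (2 * (L + 1) * (2 * real q + 1)) ^ (2 * J) * (real q * r powr (1 - dd))"
      using b(2) by (intro mult_mono) auto
    also have "\<dots> = T"
    proof -
      have "2 * (L + 1) * (2 * real q + 1) = (L + 1) * (4 * real q + 2)"
        by (simp add: algebra_simps)
      then show ?thesis
        unfolding T_def by (simp add: power_mult_distrib mult_ac)
    qed
    finally show ?thesis
      using measure_near_digit_sums_le(2)[OF q Q, of "N c" J c] by simp
  qed
  have "measure lebesgue (\<Union>c\<le>M. near_digit_sums q Q (N c) J c)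
          \<le> (\<Sum>c\<le>M. measure lebesgue (near_digit_sums q Q (N c) J c))"
    using measure_near_digit_sums_le(1)[OF q Q] by (intro measure_UNION_le) (auto intro: fmeasurableD)
  also have "\<dots> \<le> (\<Sum>c\<le>M. T)"
    by (rule sum_mono) (use \<open>\<And>c. c \<le> M \<Longrightarrow> _ \<le> T\<close> in auto)
  also have "\<dots> = (M + 1) * T"
    by simp
  also have "\<dots> \<le> (L + 1) * T"
    using M q r by (intro mult_right_mono) (auto simp: T_def L_def)
  finally show ?thesis
    by (simp add: T_def mult_ac)
qed

lemma exceptional_set_bounds:
  fixes p N :: "nat \<Rightarrow> nat" and r dd L :: real and C0 J :: nat
  defines "q \<equiv> p 1" and "Q \<equiv> p 2" and "L \<equiv> ln (1/r)"
  assumes gen: "coprime_generators 2 p" and r: "0 < r" "r < 1" and C0: "real C0 \<le> L"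
    and c: "\<And>c. c \<le> C0 \<Longrightarrow> real c * ln Q \<le> dd * L"
    and N: "\<And>c. c \<le> C0 \<Longrightarrow> real q ^ N c * (r * real Q ^ c) \<le> 1"
      "\<And>c. c \<le> C0 \<Longrightarrow> 1 < real q ^ Suc (N c) * (r * real Q ^ c)"
  shows "\<exists>E. E \<subseteq> {-1/2..1/2} \<and> E \<in> sets lebesgue \<and>
           measure lebesgue E
             \<le> 3 * real q * (4 * real q + 2) ^ (2 * J) * (L + 1) ^ (2 * J + 1) * r powr (1 - dd) \<and>
           (\<forall>y \<in> {-1/2..1/2} - E. (real C0 + 1) * real J / (4 * real q ^ 2) \<le> Sigma_sum 2 p r y)"
proof -
  have q: "2 \<le> q" and "2 \<le> Q"
    using gen by (auto simp: coprime_generators_def q_def Q_def)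
  then have Q: "1 \<le> Q"
    by simp
  define U where "U = (\<Union>c\<le>C0. near_digit_sums q Q (N c) J c)"
  have "U \<in> lmeasurable"
    unfolding U_def using measure_near_digit_sums_le(1)[OF q Q] by (intro fmeasurable.finite_UN) auto
  show ?thesis
  proof (intro exI[of _ "{-1/2..1/2} \<inter> U"] conjI ballI)
    show "{-1/2..1/2} \<inter> U \<in> sets lebesgue"
      using \<open>U \<in> lmeasurable\<close> by (intro sets.Int) auto
    have "measure lebesgue ({-1/2..1/2} \<inter> U) \<le> measure lebesgue U"
      using \<open>U \<in> lmeasurable\<close> by (intro measure_mono_fmeasurable) auto
    also have "\<dots> \<le> 3 * real q * (4 * real q + 2) ^ (2 * J) * (L + 1) ^ (2 * J + 1) * r powr (1 - dd)"
      unfolding U_def L_def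
      by (rule measure_UN_near_digit_sums_le[OF q Q r]) (use C0 c N in \<open>auto simp: L_def\<close>)
    finally show "measure lebesgue ({-1/2..1/2} \<inter> U)
                    \<le> 3 * real q * (4 * real q + 2) ^ (2 * J) * (L + 1) ^ (2 * J + 1) * r powr (1 - dd)" .
  next
    fix y assume y: "y \<in> {-1/2..1/2} - {-1/2..1/2} \<inter> U"
    have "J \<le> card {a \<in> {0..N c}. 1 / (2 * real q) \<le> dist_nint (real q ^ a * (real Q ^ c * y))}"
      if "c \<le> C0" for c
      using mem_near_digit_sums_if_few_far_powers[OF q Q, of y "N c" c J] y that
      by (force simp: U_def not_less)
    then show "(real C0 + 1) * real J / (4 * real q ^ 2) \<le> Sigma_sum 2 p r y"
      using N(1) unfolding q_def Q_def by (intro Sigma_sum_2_lower_bound[OF gen r(1)])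
  qed auto
qed

lemma exists_small_exceptional_set:
  fixes p :: "nat \<Rightarrow> nat" and r dd L :: real and J :: nat
  defines "L \<equiv> ln (1/r)"
  assumes gen: "coprime_generators 2 p" and r: "0 < r" "r < 1" and dd: "0 < dd" "dd \<le> 1/2"
  shows "\<exists>E. E \<subseteq> {-1/2..1/2} \<and> E \<in> sets lebesgue \<and>
           measure lebesgue E
             \<le> 3 * real (p 1) * (4 * real (p 1) + 2) ^ (2 * J) * (L + 1) ^ (2 * J + 1) * r powr (1 - dd) \<and>
           (\<forall>y \<in> {-1/2..1/2} - E. dd * L / ln (p 2) * J / (4 * real (p 1) ^ 2) \<le> Sigma_sum 2 p r y)"
proof -
  define q where "q = p 1"
  define Q where "Q = p 2"
  have q: "2 \<le> q" and Q: "2 \<le> Q"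
    using gen by (auto simp: coprime_generators_def q_def Q_def)
  have "0 \<le> L" "0 < ln Q"
    using r Q by (auto simp: L_def)
  have "ln 2 \<le> ln Q"
    using Q by simp
  then have "dd * L / ln Q \<le> L"
    using dd ln2_ge_two_thirds \<open>0 \<le> L\<close> \<open>0 < ln Q\<close> by (simp add: field_simps mult_left_mono)
  define C0 where "C0 = nat \<lfloor>dd * L / ln Q\<rfloor>"
  have C0: "real C0 \<le> dd * L / ln Q" "dd * L / ln Q \<le> real C0 + 1"
    unfolding C0_def using nat_floor_bounds \<open>0 \<le> L\<close> \<open>0 < ln Q\<close> dd by auto
  have c: "real c * ln Q \<le> dd * L" if "c \<le> C0" for c
    using C0(1) that \<open>0 < ln Q\<close> by (simp add: field_simps) (meson le_divide_eq of_nat_le_iff order_trans)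
  have "\<exists>N. c \<le> C0 \<longrightarrow> real q ^ N * (r * real Q ^ c) \<le> 1 \<and> 1 < real q ^ Suc N * (r * real Q ^ c)" for c
  proof (cases "c \<le> C0")
    case True
    have "r * real Q ^ c \<le> r * r powr (- dd)"
      using power_le_powr_if_ln_le[of Q r c dd] c[OF True] Q r by (simp add: L_def)
    also have "\<dots> = r powr (1 - dd)"
      using r by (simp add: powr_diff powr_minus field_simps)
    also have "\<dots> \<le> 1"
      using r dd by (intro powr_le1) auto
    finally show ?thesis
      using exists_power_bracket[OF q, of "r * real Q ^ c"] r Q by simp
  qed simp
  then obtain N where "\<And>c. c \<le> C0 \<Longrightarrow> real q ^ N c * (r * real Q ^ c) \<le> 1"
    "\<And>c. c \<le> C0 \<Longrightarrow> 1 < real q ^ Suc (N c) * (r * real Q ^ c)"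
    by metis
  moreover have "real C0 \<le> L"
    using C0(1) \<open>dd * L / ln Q \<le> L\<close> by linarith
  ultimately obtain E where E: "E \<subseteq> {-1/2..1/2}" "E \<in> sets lebesgue"
    "measure lebesgue E \<le> 3 * real q * (4 * real q + 2) ^ (2 * J) * (L + 1) ^ (2 * J + 1) * r powr (1 - dd)"
    and lower: "\<And>y. y \<in> {-1/2..1/2} - E \<Longrightarrow> (real C0 + 1) * real J / (4 * real q ^ 2) \<le> Sigma_sum 2 p r y"
    using exceptional_set_bounds[OF gen r, of C0 dd N J] c unfolding q_def Q_def L_def by blast
  have "dd * L / ln Q * J / (4 * real q ^ 2) \<le> (real C0 + 1) * real J / (4 * real q ^ 2)"
    using C0(2) by (intro divide_right_mono mult_right_mono) auto
  then show ?thesis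
    using E order_trans[OF _ lower] by (intro exI[of _ E]) (auto simp: q_def Q_def)
qed

lemma Sigma_sum_2_large_outside_small_set:
  fixes K \<delta> :: real
  assumes gen: "coprime_generators 2 p" and K: "0 < K" and \<delta>: "0 < \<delta>"
  shows "\<exists>B>0. \<exists>rss>0. \<forall>r. 0 < r \<and> r < rss \<longrightarrow>
           (\<exists>E. E \<subseteq> {-1/2..1/2} \<and> E \<in> sets lebesgue \<and>
                measure lebesgue E \<le> B * r powr (1 - \<delta>) \<and>
                (\<forall>y \<in> {-1/2..1/2} - E. Sigma_sum 2 p r y \<ge> K * ln (1 / r)))"
proof -
  define q where "q = p 1"
  define Q where "Q = p 2"
  have q: "2 \<le> q" and "2 \<le> Q"
    using gen by (auto simp: coprime_generators_def q_def Q_def)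
  then have "0 < ln Q"
    by simp
  define dd where "dd = min \<delta> 1 / 2"
  have dd: "0 < dd" "dd \<le> 1/2" "dd < \<delta>"
    using \<delta> by (auto simp: dd_def)
  define J where "J = nat \<lceil>4 * real q ^ 2 * K * ln Q / dd\<rceil>"
  define k where "k = 2 * J + 1"
  define C where "C = 3 * real q * (4 * real q + 2) ^ (2 * J)"
  define B where "B = C * ((k / (\<delta> - dd)) ^ k * exp (\<delta> - dd))"
  have "0 < B"
    using q dd by (simp add: B_def C_def k_def)
  have "4 * real q ^ 2 * K * ln Q / dd \<le> J"
    unfolding J_def by linarith
  then have KJ: "K \<le> dd * J / (4 * real q ^ 2 * ln Q)"
    using dd \<open>0 < ln Q\<close> q by (simp add: field_simps)
  have "\<exists>E. E \<subseteq> {-1/2..1/2} \<and> E \<in> sets lebesgue \<and> measure lebesgue E \<le> B * r powr (1 - \<delta>) \<and>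
          (\<forall>y \<in> {-1/2..1/2} - E. Sigma_sum 2 p r y \<ge> K * ln (1 / r))"
    if r: "0 < r" "r < 1" for r
  proof -
    obtain E where E: "E \<subseteq> {-1/2..1/2}" "E \<in> sets lebesgue"
      and mE: "measure lebesgue E \<le> C * ((ln (1/r) + 1) ^ k * r powr (1 - dd))"
      and lower: "\<And>y. y \<in> {-1/2..1/2} - E \<Longrightarrow>
                    dd * ln (1/r) / ln Q * J / (4 * real q ^ 2) \<le> Sigma_sum 2 p r y"
      using exists_small_exceptional_set[OF gen r dd(1,2), of J] by (auto simp: C_def k_def q_def Q_def mult.assoc)
    have "(ln (1/r) + 1) ^ k * r powr (1 - dd) \<le> (k / (\<delta> - dd)) ^ k * exp (\<delta> - dd) * r powr (1 - \<delta>)"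
      using ln_power_mult_powr_le[of "\<delta> - dd" k r "1 - dd"] dd r by (simp add: k_def)
    then have "C * ((ln (1/r) + 1) ^ k * r powr (1 - dd)) \<le> B * r powr (1 - \<delta>)"
      using q by (simp add: B_def C_def mult.assoc mult_left_mono)
    moreover have "K * ln (1/r) \<le> dd * ln (1/r) / ln Q * J / (4 * real q ^ 2)"
      using mult_right_mono[OF KJ, of "ln (1/r)"] r by (simp add: field_simps)
    ultimately show ?thesis
      using E mE order_trans[OF _ lower] by (intro exI[of _ E]) auto
  qed
  then show ?thesis
    using \<open>0 < B\<close> by (intro exI[of _ B] conjI exI[of _ "1::real"] allI impI) simp_all
qed

theorem mainTheorem9:
  fixes m :: nat and p :: "nat \<Rightarrow> nat"
  assumes m2: "m \<ge> 2"
    and p1: "1 < p 1"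
    and pmono: "strict_mono_on {1..m} p"
    and pcop: "\<And>i j. i \<in> {1..m} \<Longrightarrow> j \<in> {1..m} \<Longrightarrow> i \<noteq> j \<Longrightarrow> coprime (p i) (p j)"
  shows "(\<exists>A1>0. \<exists>A2>0. \<exists>rs>0. \<forall>r. 0 < r \<and> r < rs \<longrightarrow>
            (\<forall>y::real. \<bar>y\<bar> \<le> r / 2 \<longrightarrow>
               Sigma_sum m p r y \<ge> A1 * (y / r)^2 * (ln (1 / r)) ^ (m - 1)) \<and>
            (\<forall>y::real. r / 2 \<le> \<bar>y\<bar> \<and> \<bar>y\<bar> \<le> 1 / 2 \<longrightarrow>
               Sigma_sum m p r y \<ge> A2 * (ln (1 / r)) ^ (m - 1)))
       \<and> (m = 2 \<longrightarrow>
          (\<forall>K>0. \<forall>\<delta>>0. \<exists>B>0. \<exists>rss>0. \<forall>r. 0 < r \<and> r < rss \<longrightarrow>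
             (\<exists>E. E \<subseteq> {-1/2..1/2} \<and> E \<in> sets lebesgue \<and>
                  measure lebesgue E \<le> B * r powr (1 - \<delta>) \<and>
                  (\<forall>y \<in> {-1/2..1/2} - E. Sigma_sum m p r y \<ge> K * ln (1 / r)))))"
proof -
  have gen: "coprime_generators m p"
    unfolding coprime_generators_def
  proof (intro conjI ballI impI)
    fix i assume "i \<in> {1..m}"
    then have "p 1 \<le> p i"
      using strict_mono_on_leD[OF pmono, of 1 i] m2 by auto
    then show "2 \<le> p i"
      using p1 by simp
  qed (rule pcop)
  show ?thesis
    using Sigma_sum_lower_bounds[OF _ gen] Sigma_sum_2_large_outside_small_set[of p] gen m2
    by (intro conjI impI allI) simp_all
qed

end
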